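(* Let $0<\kappa<1$, $\lambda=\sqrt{1-\kappa^2}$, and let $k\in(0,1)$ be defined by $k^2=\frac{1-\lambda}{1+\lambda}$ (so that $\kappa^2=\frac{4k^2}{(1+k^2)^2}$). For $\phi$ near $0$ define $$u(\phi)=\int_0^{\phi} F\!\left(\tfrac14,\tfrac34;\tfrac12;\kappa^2\sin^2\theta\right)\,\mathrm{d}\theta ,$$ let $u\mapsto\phi(u)$ be the local inverse near $0$ with $\phi(0)=0$, and set $s(u)=\sin\phi(u)$. Let $\mathrm{sn},\mathrm{dn}$ be the Jacobian elliptic functions of modulus $k$. Then $$s^2(u)=\mathrm{sn}^2\!\left[(1+k^2)^{-1/2}u\right]\Big\{k^2+\mathrm{dn}^2\!\left[(1+k^2)^{-1/2}u\right]\Big\}.$$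
   Context: $F(a,b;c;z)$ denotes the Gauss hypergeometric function ${}_2F_1(a,b;c;z)$. $\mathrm{sn},\mathrm{cn},\mathrm{dn}$ are the standard Jacobian elliptic functions of modulus $k$. The identity holds near $u=0$ (and hence for the meromorphic extension of $s^2$). *)

theory Defs
  imports "HOL-Analysis.Analysis"
begin

text \<open>Gauss hypergeometric function 2F1(a,b;c;z) as its power series (used for |z| < 1).\<close>
definition hyp2F1 :: "real \<Rightarrow> real \<Rightarrow> real \<Rightarrow> real \<Rightarrow> real" where
  "hyp2F1 a b c z =
     (\<Sum>n. pochhammer a n * pochhammer b n / (pochhammer c n * fact n) * z ^ n)"

definition ell_F :: "real \<Rightarrow> real \<Rightarrow> real" where
  "ell_F k \<phi> = (LBINT \<theta>=0..\<phi>. 1 / sqrt (1 - k\<^sup>2 * (sin \<theta>)\<^sup>2))"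

definition jacobi_am :: "real \<Rightarrow> real \<Rightarrow> real" where
  "jacobi_am k u = (THE \<phi>. ell_F k \<phi> = u)"

definition jacobi_sn :: "real \<Rightarrow> real \<Rightarrow> real" where
  "jacobi_sn k u = sin (jacobi_am k u)"

definition jacobi_cn :: "real \<Rightarrow> real \<Rightarrow> real" where
  "jacobi_cn k u = cos (jacobi_am k u)"

definition jacobi_dn :: "real \<Rightarrow> real \<Rightarrow> real" where
  "jacobi_dn k u = sqrt (1 - k\<^sup>2 * (jacobi_sn k u)\<^sup>2)"

end

theory Submission
  imports Defs
begin

text \<open>
  \<open>F(1/4, 3/4; 1/2; x\<^sup>2)\<close> is the even part of the binomial series of \<open>(1 + x) powr (-1/2)\<close>,
  i.e. \<open>((1 + x) powr (-1/2) + (1 - x) powr (-1/2)) / 2\<close>. With \<open>\<kappa> = 2k / (1 + k\<^sup>2)\<close>,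
  the Landen-type substitution \<open>sin \<psi> = sin \<phi> \<cdot> sqrt (1 + k\<^sup>2 cos\<^sup>2 \<phi>)\<close> gives
  \<open>1 \<plusminus> \<kappa> sin \<psi> = (sqrt (1 + k\<^sup>2 cos\<^sup>2 \<phi>) \<plusminus> k sin \<phi>)\<^sup>2 / (1 + k\<^sup>2)\<close>, and under it
  \<open>u(\<psi>)\<close> becomes \<open>sqrt (1 + k\<^sup>2)\<close> times the elliptic integral \<open>F(\<phi>, k)\<close>.
  As \<open>u\<close> is strictly increasing, \<open>\<phi>(u) = \<psi>\<close> with \<open>\<phi> = am (u / sqrt (1 + k\<^sup>2))\<close>, and then
  \<open>sin\<^sup>2 \<psi> = sn\<^sup>2 (1 + k\<^sup>2 cn\<^sup>2) = sn\<^sup>2 (k\<^sup>2 + dn\<^sup>2)\<close>.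
\<close>

lemma has_real_derivative_LBINT_0:
  fixes f :: "real \<Rightarrow> real"
  assumes "continuous_on UNIV f"
  shows "((\<lambda>u. LBINT y=0..u. f y) has_real_derivative f x) (at x)"
proof -
  have "((\<lambda>u. LBINT y=0..u. f y) has_vector_derivative f x) (at x within {-\<bar>x\<bar>-1..\<bar>x\<bar>+1})"
    using interval_integral_FTC2[of "-\<bar>x\<bar>-1" 0 "\<bar>x\<bar>+1" f x] continuous_on_subset[OF assms]
    by (auto simp: zero_ereal_def)
  moreover have "at x within {-\<bar>x\<bar>-1..\<bar>x\<bar>+1} = at x"
    by (rule at_within_Icc_at) auto
  ultimately show ?thesis
    by (simp add: has_real_derivative_iff_has_vector_derivative)
qed

lemma powr_minus_half: "0 < (x::real) \<Longrightarrow> x powr (-1/2) = 1 / sqrt x"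
  using powr_minus_divide[of x "1/2"] by (simp add: powr_half_sqrt)

lemma hyp2F1_quarter_three_quarters_half:
  fixes x :: real
  assumes "\<bar>x\<bar> < 1"
  shows "hyp2F1 (1/4) (3/4) (1/2) (x\<^sup>2) = ((1 + x) powr (-1/2) + (1 - x) powr (-1/2)) / 2"
proof -
  define c where "c n = ((-1/2::real) gchoose n)" for n
  have "(\<lambda>n. c n * x ^ n) sums (1 + x) powr (-1/2)"
    unfolding c_def by (rule gen_binomial_real) (use assms in auto)
  moreover have "(\<lambda>n. c n * (-x) ^ n) sums (1 - x) powr (-1/2)"
    unfolding c_def using gen_binomial_real[of "-x"] assms by auto
  ultimately have "(\<lambda>n. c n * (x ^ n + (-x) ^ n)) sums ((1 + x) powr (-1/2) + (1 - x) powr (-1/2))"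
    by (auto dest: sums_add simp: algebra_simps)
  \<comment> \<open>The odd terms cancel, and by the duplication formulas the even coefficient
      \<open>c (2m)\<close> is the \<open>m\<close>-th coefficient of the hypergeometric series.\<close>
  moreover have "c n * (x ^ n + (-x) ^ n) = 0" if "n \<notin> range (\<lambda>m. 2*m)" for n
  proof -
    have "odd n" using that by (metis evenE rangeI)
    then show ?thesis by (simp add: power_minus_odd)
  qed
  ultimately have even: "(\<lambda>m. c (2*m) * (x ^ (2*m) + (-x) ^ (2*m)))
      sums ((1 + x) powr (-1/2) + (1 - x) powr (-1/2))"
    using sums_mono_reindex[of "\<lambda>m. 2*m" "\<lambda>n. c n * (x ^ n + (-x) ^ n)"]
    by (simp add: strict_mono_def)
  have coeff: "c (2*m) = pochhammer (1/4) m * pochhammer (3/4) m / (pochhammer (1/2) m * fact m)" for m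
  proof -
    have "pochhammer (1/2::real) (2*m) = 2 ^ (2*m) * pochhammer (1/4) m * pochhammer (3/4) m"
      using pochhammer_double[of "1/4::real" m] by simp
    moreover have "fact (2*m) = (2 ^ (2*m) * pochhammer (1/2) m * fact m :: real)"
      by (rule fact_double)
    moreover have "pochhammer (1/2::real) m > 0"
      by (rule pochhammer_pos) simp
    ultimately show ?thesis
      unfolding c_def gbinomial_pochhammer by (simp add: field_simps)
  qed
  have "(\<lambda>m. pochhammer (1/4) m * pochhammer (3/4) m / (pochhammer (1/2) m * fact m) * (x\<^sup>2) ^ m)
        sums (((1 + x) powr (-1/2) + (1 - x) powr (-1/2)) / 2)"
    using sums_divide[OF even, of 2] by (simp add: coeff power_mult power_even_eq mult.assoc)
  then show ?thesis
    unfolding hyp2F1_def by (rule sums_unique[symmetric])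
qed

lemma abs_mult_sin_less_1:
  fixes k x :: real
  assumes "\<bar>k\<bar> < 1"
  shows "\<bar>k * sin x\<bar> < 1"
  using mult_left_le[OF abs_sin_le_one[of x], of "\<bar>k\<bar>"] assms by (simp add: abs_mult)

lemma hyp2F1_sin_sq:
  fixes \<kappa> \<theta> :: real
  assumes "\<bar>\<kappa>\<bar> < 1"
  shows "hyp2F1 (1/4) (3/4) (1/2) (\<kappa>\<^sup>2 * (sin \<theta>)\<^sup>2) =
           ((1 + \<kappa> * sin \<theta>) powr (-1/2) + (1 - \<kappa> * sin \<theta>) powr (-1/2)) / 2"
  using hyp2F1_quarter_three_quarters_half[OF abs_mult_sin_less_1[OF assms]]
  by (simp add: power_mult_distrib)

lemma hyp2F1_sin_sq_pos:
  fixes \<kappa> \<theta> :: real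
  assumes "\<bar>\<kappa>\<bar> < 1"
  shows "0 < hyp2F1 (1/4) (3/4) (1/2) (\<kappa>\<^sup>2 * (sin \<theta>)\<^sup>2)"
  using abs_mult_sin_less_1[OF assms, of \<theta>] unfolding hyp2F1_sin_sq[OF assms]
  by (intro divide_pos_pos add_pos_pos) auto

definition hyp_F :: "real \<Rightarrow> real \<Rightarrow> real" where
  "hyp_F \<kappa> \<phi> = (LBINT \<theta>=0..\<phi>. hyp2F1 (1/4) (3/4) (1/2) (\<kappa>\<^sup>2 * (sin \<theta>)\<^sup>2))"

lemma hyp_F_0: "hyp_F \<kappa> 0 = 0"
  by (simp add: hyp_F_def zero_ereal_def)

lemma hyp_F_has_real_derivative:
  assumes "\<bar>\<kappa>\<bar> < 1"
  shows "(hyp_F \<kappa> has_real_derivative hyp2F1 (1/4) (3/4) (1/2) (\<kappa>\<^sup>2 * (sin x)\<^sup>2)) (at x)"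
proof -
  have "1 + \<kappa> * sin \<theta> \<noteq> 0" "1 - \<kappa> * sin \<theta> \<noteq> 0" for \<theta>
    using abs_mult_sin_less_1[OF assms, of \<theta>] by auto
  then have "continuous_on UNIV (\<lambda>\<theta>. hyp2F1 (1/4) (3/4) (1/2) (\<kappa>\<^sup>2 * (sin \<theta>)\<^sup>2))"
    unfolding hyp2F1_sin_sq[OF assms] by (intro continuous_intros) auto
  then show ?thesis
    unfolding hyp_F_def by (rule has_real_derivative_LBINT_0)
qed

lemma strict_mono_hyp_F:
  assumes "\<bar>\<kappa>\<bar> < 1"
  shows "strict_mono (hyp_F \<kappa>)"
proof (rule strict_monoI)
  fix a b :: real
  assume "a < b"
  then show "hyp_F \<kappa> a < hyp_F \<kappa> b"
    by (rule DERIV_pos_imp_increasing)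
       (use hyp_F_has_real_derivative[OF assms] hyp2F1_sin_sq_pos[OF assms] in blast)
qed

lemma one_minus_sq_mult_sin_sq_pos:
  fixes k x :: real
  assumes "\<bar>k\<bar> < 1"
  shows "0 < 1 - k\<^sup>2 * (sin x)\<^sup>2"
  using abs_mult_sin_less_1[OF assms, of x] abs_square_less_1[of "k * sin x"]
  by (simp add: power_mult_distrib)

lemma ell_F_0: "ell_F k 0 = 0"
  by (simp add: ell_F_def zero_ereal_def)

lemma ell_F_has_real_derivative:
  assumes "\<bar>k\<bar> < 1"
  shows "(ell_F k has_real_derivative 1 / sqrt (1 - k\<^sup>2 * (sin x)\<^sup>2)) (at x)"
proof -
  have "continuous_on UNIV (\<lambda>\<theta>. 1 / sqrt (1 - k\<^sup>2 * (sin \<theta>)\<^sup>2))"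
    using one_minus_sq_mult_sin_sq_pos[OF assms] by (intro continuous_intros) (auto simp: less_le)
  then show ?thesis
    unfolding ell_F_def by (rule has_real_derivative_LBINT_0)
qed

lemma ell_F_diff_ge:
  assumes "\<bar>k\<bar> < 1" and "y \<le> x"
  shows "x - y \<le> ell_F k x - ell_F k y"
proof -
  have deriv: "((\<lambda>t. ell_F k t - t) has_real_derivative 1 / sqrt (1 - k\<^sup>2 * (sin t)\<^sup>2) - 1) (at t)" for t
    using ell_F_has_real_derivative[OF assms(1)] by (auto intro!: derivative_eq_intros)
  have "ell_F k y - y \<le> ell_F k x - x"
  proof (rule DERIV_nonneg_imp_increasing_open[OF assms(2)])
    fix t
    have "1 \<le> 1 / sqrt (1 - k\<^sup>2 * (sin t)\<^sup>2)"
      using one_minus_sq_mult_sin_sq_pos[OF assms(1), of t] by (simp add: field_simps)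
    then show "\<exists>d. ((\<lambda>t. ell_F k t - t) has_real_derivative d) (at t) \<and> 0 \<le> d"
      using deriv[of t] by (intro exI[of _ "1 / sqrt (1 - k\<^sup>2 * (sin t)\<^sup>2) - 1"]) simp
  next
    show "continuous_on {y..x} (\<lambda>t. ell_F k t - t)"
      using deriv by (intro continuous_at_imp_continuous_on ballI) (blast intro: DERIV_isCont)
  qed
  then show ?thesis by simp
qed

lemma strict_mono_ell_F:
  assumes "\<bar>k\<bar> < 1"
  shows "strict_mono (ell_F k)"
proof (rule strict_monoI)
  fix y x :: real
  assume "y < x"
  then show "ell_F k y < ell_F k x"
    using ell_F_diff_ge[OF assms, of y x] by linarith
qed

lemma ex_ell_F_eq:
  assumes "\<bar>k\<bar> < 1"
  shows "\<exists>\<phi>. \<bar>\<phi>\<bar> \<le> \<bar>v\<bar> \<and> ell_F k \<phi> = v"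
proof -
  have cont: "isCont (ell_F k) t" for t
    using ell_F_has_real_derivative[OF assms] by (rule DERIV_isCont)
  show ?thesis
  proof (cases "0 \<le> v")
    case True
    then have "v \<le> ell_F k v" using ell_F_diff_ge[OF assms True] by (simp add: ell_F_0)
    then obtain \<phi> where "0 \<le> \<phi>" "\<phi> \<le> v" "ell_F k \<phi> = v"
      using IVT[of "ell_F k" 0 v v] True cont by (auto simp: ell_F_0)
    then show ?thesis by (intro exI[of _ \<phi>]) auto
  next
    case False
    then have "ell_F k v \<le> v" using ell_F_diff_ge[OF assms, of v 0] by (simp add: ell_F_0)
    then obtain \<phi> where "v \<le> \<phi>" "\<phi> \<le> 0" "ell_F k \<phi> = v"
      using IVT[of "ell_F k" v v 0] False cont by (auto simp: ell_F_0)
    then show ?thesis by (intro exI[of _ \<phi>]) auto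
  qed
qed

lemma jacobi_am_eqI:
  assumes "\<bar>k\<bar> < 1" and "ell_F k \<phi> = v"
  shows "jacobi_am k v = \<phi>"
  unfolding jacobi_am_def
  using assms strict_mono_eq[OF strict_mono_ell_F[OF assms(1)]] by (intro the_equality) auto

lemma abs_two_mult_div_one_plus_sq_less_1:
  fixes k :: real
  assumes "\<bar>k\<bar> < 1"
  shows "\<bar>2 * k / (1 + k\<^sup>2)\<bar> < 1"
proof -
  have pos: "0 < 1 + k\<^sup>2"
    using zero_le_power2[of k] by linarith
  have "0 < (1 - \<bar>k\<bar>)\<^sup>2"
    using assms by simp
  then have "2 * \<bar>k\<bar> < 1 + k\<^sup>2"
    by (simp add: power2_eq_square algebra_simps)
  then show ?thesis
    using pos by (simp add: abs_divide abs_mult)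
qed

definition landen_sin :: "real \<Rightarrow> real \<Rightarrow> real" where
  "landen_sin k x = sin x * sqrt (1 + k\<^sup>2 * (cos x)\<^sup>2)"

lemma landen_sin_sq:
  "(landen_sin k x)\<^sup>2 = (sin x)\<^sup>2 * (k\<^sup>2 + (1 - k\<^sup>2 * (sin x)\<^sup>2))"
proof -
  have "(sqrt (1 + k\<^sup>2 * (cos x)\<^sup>2))\<^sup>2 = 1 + k\<^sup>2 * (cos x)\<^sup>2"
    by (simp add: add_nonneg_nonneg)
  also have "\<dots> = k\<^sup>2 + (1 - k\<^sup>2 * (sin x)\<^sup>2)"
    by (simp add: cos_squared_eq algebra_simps)
  finally have r2: "(sqrt (1 + k\<^sup>2 * (cos x)\<^sup>2))\<^sup>2 = k\<^sup>2 + (1 - k\<^sup>2 * (sin x)\<^sup>2)" .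
  show ?thesis
    unfolding landen_sin_def power_mult_distrib r2 ..
qed

lemma one_minus_landen_sin_sq:
  "1 - (landen_sin k x)\<^sup>2 = (cos x)\<^sup>2 * (1 - k\<^sup>2 * (sin x)\<^sup>2)"
  unfolding landen_sin_sq cos_squared_eq by (simp add: power2_eq_square algebra_simps)

lemma sqrt_one_minus_landen_sin_sq:
  assumes "\<bar>k\<bar> < 1" and "\<bar>x\<bar> < pi / 2"
  shows "sqrt (1 - (landen_sin k x)\<^sup>2) = cos x * sqrt (1 - k\<^sup>2 * (sin x)\<^sup>2)"
proof -
  have "0 < cos x"
    using assms(2) by (intro cos_gt_zero_pi) (auto simp: abs_less_iff)
  then show ?thesis
    unfolding one_minus_landen_sin_sq by (simp add: real_sqrt_mult)
qed

lemma abs_landen_sin_less_1: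
  assumes "\<bar>k\<bar> < 1" and "\<bar>x\<bar> < pi / 2"
  shows "\<bar>landen_sin k x\<bar> < 1"
proof -
  have "0 < cos x"
    using assms(2) by (intro cos_gt_zero_pi) (auto simp: abs_less_iff)
  then have "0 < sqrt (1 - (landen_sin k x)\<^sup>2)"
    unfolding sqrt_one_minus_landen_sin_sq[OF assms]
    using one_minus_sq_mult_sin_sq_pos[OF assms(1)] by simp
  then show ?thesis
    using abs_square_less_1[of "landen_sin k x"] by simp
qed

lemma landen_sin_has_real_derivative:
  "(landen_sin k has_real_derivative
      cos x * (1 + k\<^sup>2 * (cos x)\<^sup>2 - k\<^sup>2 * (sin x)\<^sup>2) / sqrt (1 + k\<^sup>2 * (cos x)\<^sup>2)) (at x)"
proof -
  define r where "r = sqrt (1 + k\<^sup>2 * (cos x)\<^sup>2)"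
  have r: "0 < r" "r\<^sup>2 = 1 + k\<^sup>2 * (cos x)\<^sup>2"
    unfolding r_def by (simp_all add: add_pos_nonneg add_nonneg_nonneg)
  have "(landen_sin k has_real_derivative
          cos x * r + sin x * (inverse r / 2 * (k\<^sup>2 * (2 * cos x * - sin x)))) (at x)"
    unfolding landen_sin_def[abs_def] r_def using r
    by (auto intro!: derivative_eq_intros simp: r_def power2_eq_square)
  moreover have "cos x * r + sin x * (inverse r / 2 * (k\<^sup>2 * (2 * cos x * - sin x))) =
      cos x * (r\<^sup>2 - k\<^sup>2 * (sin x)\<^sup>2) / r"
    using r(1) by (simp add: field_simps power2_eq_square)
  ultimately show ?thesis
    unfolding r(2) r_def by simp
qed

lemma one_plus_landen_sin:
  fixes k x :: real
  shows "1 + 2 * k / (1 + k\<^sup>2) * landen_sin k x =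
           (sqrt (1 + k\<^sup>2 * (cos x)\<^sup>2) + k * sin x)\<^sup>2 / (1 + k\<^sup>2)"
proof -
  define r where "r = sqrt (1 + k\<^sup>2 * (cos x)\<^sup>2)"
  have "r\<^sup>2 = 1 + k\<^sup>2 * (cos x)\<^sup>2"
    unfolding r_def by (simp add: add_nonneg_nonneg)
  also have "\<dots> = 1 + k\<^sup>2 - k\<^sup>2 * (sin x)\<^sup>2"
    by (simp add: cos_squared_eq algebra_simps)
  finally have "r\<^sup>2 = 1 + k\<^sup>2 - k\<^sup>2 * (sin x)\<^sup>2" .
  then have "(r + k * sin x)\<^sup>2 = 1 + k\<^sup>2 + 2 * k * (sin x * r)"
    by (simp add: power2_eq_square algebra_simps)
  moreover have "1 + k\<^sup>2 \<noteq> 0"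
    using zero_le_power2[of k] by linarith
  ultimately show ?thesis
    unfolding landen_sin_def r_def[symmetric] by (simp add: field_simps)
qed

lemma hyp2F1_landen_sin:
  fixes k x :: real
  assumes "\<bar>k\<bar> < 1"
  defines "r \<equiv> sqrt (1 + k\<^sup>2 * (cos x)\<^sup>2)"
  shows "hyp2F1 (1/4) (3/4) (1/2) ((2 * k / (1 + k\<^sup>2))\<^sup>2 * (landen_sin k x)\<^sup>2) =
           sqrt (1 + k\<^sup>2) * r / (r\<^sup>2 - k\<^sup>2 * (sin x)\<^sup>2)"
proof -
  define \<kappa> where "\<kappa> = 2 * k / (1 + k\<^sup>2)"
  define t where "t = sin x"
  have pos: "0 < 1 + k\<^sup>2"
    using zero_le_power2[of k] by linarith
  have "\<bar>k * t\<bar> < 1"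
    unfolding t_def by (rule abs_mult_sin_less_1[OF assms(1)])
  moreover have "1 \<le> r"
    unfolding r_def by simp
  ultimately have rkt: "0 < r + k * t" "0 < r - k * t"
    by (auto simp: abs_less_iff)
  have plus: "1 + \<kappa> * landen_sin k x = (r + k * t)\<^sup>2 / (1 + k\<^sup>2)"
    unfolding \<kappa>_def r_def t_def by (rule one_plus_landen_sin)
  have minus: "1 - \<kappa> * landen_sin k x = (r - k * t)\<^sup>2 / (1 + k\<^sup>2)"
    using one_plus_landen_sin[of "-k" x]
    by (simp add: \<kappa>_def r_def t_def landen_sin_def)
  have root: "(1 + \<kappa> * landen_sin k x) powr (-1/2) = sqrt (1 + k\<^sup>2) / (r + k * t)"
    "(1 - \<kappa> * landen_sin k x) powr (-1/2) = sqrt (1 + k\<^sup>2) / (r - k * t)"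
    unfolding plus minus using rkt pos
    by (subst powr_minus_half; simp add: real_sqrt_divide)+
  have "0 < 1 + \<kappa> * landen_sin k x" "0 < 1 - \<kappa> * landen_sin k x"
    unfolding plus minus using rkt pos by simp_all
  then have "\<bar>\<kappa> * landen_sin k x\<bar> < 1"
    by (simp add: abs_less_iff)
  then have "hyp2F1 (1/4) (3/4) (1/2) (\<kappa>\<^sup>2 * (landen_sin k x)\<^sup>2) =
      ((1 + \<kappa> * landen_sin k x) powr (-1/2) + (1 - \<kappa> * landen_sin k x) powr (-1/2)) / 2"
    unfolding power_mult_distrib[symmetric] by (rule hyp2F1_quarter_three_quarters_half)
  also have "\<dots> = (sqrt (1 + k\<^sup>2) * (r - k * t) + sqrt (1 + k\<^sup>2) * (r + k * t)) /
      ((r + k * t) * (r - k * t)) / 2"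
    unfolding root by (subst add_frac_eq) (use rkt in auto)
  also have "sqrt (1 + k\<^sup>2) * (r - k * t) + sqrt (1 + k\<^sup>2) * (r + k * t) = 2 * (sqrt (1 + k\<^sup>2) * r)"
    by (simp add: algebra_simps)
  also have "2 * (sqrt (1 + k\<^sup>2) * r) / ((r + k * t) * (r - k * t)) / 2 =
      sqrt (1 + k\<^sup>2) * r / ((r + k * t) * (r - k * t))"
    by simp
  also have "(r + k * t) * (r - k * t) = r\<^sup>2 - k\<^sup>2 * t\<^sup>2"
    by (simp add: power2_eq_square algebra_simps)
  finally show ?thesis
    unfolding \<kappa>_def t_def .
qed

lemma hyp_F_arcsin_landen_sin_has_real_derivative:
  assumes "\<bar>k\<bar> < 1" and "\<bar>x\<bar> < pi / 2"
  shows "((\<lambda>x. hyp_F (2 * k / (1 + k\<^sup>2)) (arcsin (landen_sin k x))) has_real_derivative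
           sqrt (1 + k\<^sup>2) / sqrt (1 - k\<^sup>2 * (sin x)\<^sup>2)) (at x)"
proof -
  define \<kappa> where "\<kappa> = 2 * k / (1 + k\<^sup>2)"
  define A where "A = landen_sin k x"
  define r where "r = sqrt (1 + k\<^sup>2 * (cos x)\<^sup>2)"
  define D where "D = r\<^sup>2 - k\<^sup>2 * (sin x)\<^sup>2"
  have A: "-1 < A" "A < 1"
    using abs_landen_sin_less_1[OF assms] by (auto simp: A_def abs_less_iff)
  have "0 < cos x"
    using assms(2) by (intro cos_gt_zero_pi) (auto simp: abs_less_iff)
  have "1 \<le> r"
    unfolding r_def by simp
  then have "1 \<le> r\<^sup>2"
    by (simp add: one_le_power)
  moreover have "k\<^sup>2 * (sin x)\<^sup>2 < 1"
    using one_minus_sq_mult_sin_sq_pos[OF assms(1), of x] by simp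
  ultimately have "0 < D"
    unfolding D_def by linarith
  have "((\<lambda>x. hyp_F \<kappa> (arcsin (landen_sin k x))) has_real_derivative
         hyp2F1 (1/4) (3/4) (1/2) (\<kappa>\<^sup>2 * (sin (arcsin A))\<^sup>2) *
           (inverse (sqrt (1 - A\<^sup>2)) * (cos x * D / r))) (at x)"
    using landen_sin_has_real_derivative[of k x] unfolding A_def D_def r_def
    by (intro DERIV_chain2[OF hyp_F_has_real_derivative] DERIV_chain2[OF DERIV_arcsin])
       (use A abs_two_mult_div_one_plus_sq_less_1[OF assms(1)] in
         \<open>auto simp: A_def \<kappa>_def add_nonneg_nonneg\<close>)
  also have "hyp2F1 (1/4) (3/4) (1/2) (\<kappa>\<^sup>2 * (sin (arcsin A))\<^sup>2) = sqrt (1 + k\<^sup>2) * r / D"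
    using A hyp2F1_landen_sin[OF assms(1), of x] by (simp add: A_def D_def \<kappa>_def r_def)
  also have "sqrt (1 + k\<^sup>2) * r / D * (inverse (sqrt (1 - A\<^sup>2)) * (cos x * D / r)) =
      sqrt (1 + k\<^sup>2) / sqrt (1 - k\<^sup>2 * (sin x)\<^sup>2)"
    unfolding A_def sqrt_one_minus_landen_sin_sq[OF assms]
    using \<open>0 < cos x\<close> one_minus_sq_mult_sin_sq_pos[OF assms(1), of x] \<open>1 \<le> r\<close> \<open>0 < D\<close>
    by (simp add: field_simps)
  finally show ?thesis
    unfolding \<kappa>_def .
qed

lemma hyp_F_arcsin_landen_sin:
  fixes k x :: real
  assumes "\<bar>k\<bar> < 1" and "\<bar>x\<bar> < pi / 2"
  shows "hyp_F (2 * k / (1 + k\<^sup>2)) (arcsin (landen_sin k x)) = sqrt (1 + k\<^sup>2) * ell_F k x"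
proof -
  define h where
    "h x = hyp_F (2 * k / (1 + k\<^sup>2)) (arcsin (landen_sin k x)) - sqrt (1 + k\<^sup>2) * ell_F k x" for x
  have deriv: "(h has_real_derivative 0) (at x)" if "\<bar>x\<bar> < pi / 2" for x
    unfolding h_def[abs_def]
    using hyp_F_arcsin_landen_sin_has_real_derivative[OF assms(1) that]
      ell_F_has_real_derivative[OF assms(1)]
    by (auto intro!: derivative_eq_intros)
  have "\<exists>C. \<forall>x\<in>{-pi/2<..<pi/2}. h x = C"
    by (rule has_field_derivative_zero_constant)
       (auto simp: convex_real_interval abs_less_iff intro!: has_field_derivative_at_within deriv)
  then obtain C where "\<forall>x\<in>{-pi/2<..<pi/2}. h x = C"
    by blast
  moreover have "h 0 = 0"
    by (simp add: h_def landen_sin_def hyp_F_0 ell_F_0)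
  ultimately show ?thesis
    using assms(2) by (force simp: h_def abs_less_iff)
qed

lemma landen_modulus_eq:
  fixes \<kappa> k :: real
  assumes "0 < \<kappa>" and "\<kappa> < 1" and "0 < k"
    and "k\<^sup>2 = (1 - sqrt (1 - \<kappa>\<^sup>2)) / (1 + sqrt (1 - \<kappa>\<^sup>2))"
  shows "\<kappa> = 2 * k / (1 + k\<^sup>2)"
proof -
  define lam where "lam = sqrt (1 - \<kappa>\<^sup>2)"
  have pos: "0 < 1 + k\<^sup>2"
    using zero_le_power2[of k] by linarith
  have "\<kappa>\<^sup>2 < 1"
    using assms(1,2) by (simp add: power_less_one_iff)
  then have "0 \<le> lam" and "lam\<^sup>2 = 1 - \<kappa>\<^sup>2"
    unfolding lam_def by simp_all
  have lam: "lam = (1 - k\<^sup>2) / (1 + k\<^sup>2)"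
    using assms(4) \<open>0 \<le> lam\<close> pos unfolding lam_def[symmetric] by (simp add: field_simps)
  have "\<kappa>\<^sup>2 = ((1 + k\<^sup>2)\<^sup>2 - (1 - k\<^sup>2)\<^sup>2) / (1 + k\<^sup>2)\<^sup>2"
    using \<open>lam\<^sup>2 = 1 - \<kappa>\<^sup>2\<close> pos unfolding lam by (simp add: power_divide field_simps)
  also have "(1 + k\<^sup>2)\<^sup>2 - (1 - k\<^sup>2)\<^sup>2 = (2 * k)\<^sup>2"
    by (simp add: power2_eq_square algebra_simps)
  finally have "\<kappa>\<^sup>2 = (2 * k / (1 + k\<^sup>2))\<^sup>2"
    by (simp add: power_divide)
  then show ?thesis
    by (rule power2_eq_imp_eq) (use assms(1,3) pos in auto)
qed

lemma sin_sq_of_hyp_F_eq: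
  fixes k v \<psi> :: real
  assumes "\<bar>k\<bar> < 1" and "\<bar>v\<bar> < pi / 2"
    and "hyp_F (2 * k / (1 + k\<^sup>2)) \<psi> = sqrt (1 + k\<^sup>2) * v"
  shows "(sin \<psi>)\<^sup>2 = (jacobi_sn k v)\<^sup>2 * (k\<^sup>2 + (jacobi_dn k v)\<^sup>2)"
proof -
  obtain \<phi> where "\<bar>\<phi>\<bar> \<le> \<bar>v\<bar>" and \<phi>: "ell_F k \<phi> = v"
    using ex_ell_F_eq[OF assms(1)] by blast
  with assms(2) have "\<bar>\<phi>\<bar> < pi / 2"
    by linarith
  then have "hyp_F (2 * k / (1 + k\<^sup>2)) \<psi> = hyp_F (2 * k / (1 + k\<^sup>2)) (arcsin (landen_sin k \<phi>))"
    using assms(3) \<phi> hyp_F_arcsin_landen_sin[OF assms(1)] by simp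
  then have "\<psi> = arcsin (landen_sin k \<phi>)"
    using strict_mono_eq[OF strict_mono_hyp_F[OF abs_two_mult_div_one_plus_sq_less_1[OF assms(1)]]]
    by blast
  then have "sin \<psi> = landen_sin k \<phi>"
    using abs_landen_sin_less_1[OF assms(1) \<open>\<bar>\<phi>\<bar> < pi / 2\<close>] by (simp add: abs_less_iff)
  moreover have sn: "jacobi_sn k v = sin \<phi>"
    by (simp add: jacobi_sn_def jacobi_am_eqI[OF assms(1) \<phi>])
  moreover have "(jacobi_dn k v)\<^sup>2 = 1 - k\<^sup>2 * (sin \<phi>)\<^sup>2"
    using one_minus_sq_mult_sin_sq_pos[OF assms(1), of \<phi>] by (simp add: jacobi_dn_def sn)
  ultimately show ?thesis
    by (simp add: landen_sin_sq)
qed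

theorem theorem9:
  fixes \<kappa> lam k :: real and U ph :: "real \<Rightarrow> real"
  assumes "0 < \<kappa>" and "\<kappa> < 1"
    and "lam = sqrt (1 - \<kappa>\<^sup>2)"
    and "0 < k" and "k < 1" and "k\<^sup>2 = (1 - lam) / (1 + lam)"
    and "\<And>\<phi>. U \<phi> = (LBINT \<theta>=0..\<phi>. hyp2F1 (1/4) (3/4) (1/2) (\<kappa>\<^sup>2 * (sin \<theta>)\<^sup>2))"
    and "ph 0 = 0" and "isCont ph 0"
    and "\<forall>\<^sub>F u in nhds 0. U (ph u) = u"
  shows "\<forall>\<^sub>F u in nhds 0.
           (sin (ph u))\<^sup>2 =
             (jacobi_sn k ((1 + k\<^sup>2) powr (-1/2) * u))\<^sup>2 *
             (k\<^sup>2 + (jacobi_dn k ((1 + k\<^sup>2) powr (-1/2) * u))\<^sup>2)"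
proof -
  have k: "\<bar>k\<bar> < 1"
    using assms(4,5) by simp
  have "\<kappa> = 2 * k / (1 + k\<^sup>2)"
    using landen_modulus_eq[OF assms(1,2,4)] assms(3,6) by blast
  then have U: "U = hyp_F (2 * k / (1 + k\<^sup>2))"
    by (simp add: assms(7) hyp_F_def fun_eq_iff)
  have "\<forall>\<^sub>F u in nhds 0. u \<in> {-1<..<1::real}"
    by (rule eventually_nhds_in_open) auto
  with assms(10) show ?thesis
  proof eventually_elim
    case (elim u)
    have pos: "0 < sqrt (1 + k\<^sup>2)"
      by (simp add: add_pos_nonneg)
    have v: "(1 + k\<^sup>2) powr (-1/2) * u = u / sqrt (1 + k\<^sup>2)"
      using powr_minus_half[of "1 + k\<^sup>2"] by (simp add: add_pos_nonneg)
    have "\<bar>u / sqrt (1 + k\<^sup>2)\<bar> \<le> \<bar>u\<bar>"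
      using frac_le[of "\<bar>u\<bar>" "\<bar>u\<bar>" 1 "sqrt (1 + k\<^sup>2)"] by (simp add: abs_divide)
    moreover have "\<bar>u\<bar> < 1"
      using elim(2) by (simp add: abs_less_iff)
    ultimately have "\<bar>u / sqrt (1 + k\<^sup>2)\<bar> < pi / 2"
      using pi_gt3 by linarith
    then show ?case
      unfolding v using elim(1) pos by (intro sin_sq_of_hyp_F_eq[OF k]) (simp_all add: U)
  qed
qed

end
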